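(* Consider the Cannings model described in the context. For $r\in\mathbb{N}$, $k_1,\dots,k_r\ge2$ and $N>k_1+\cdots+k_r$, $$\frac{E[(\nu_{1,N})_{k_1}\cdots(\nu_{r,N})_{k_r}]}{(N)_{k_1+\cdots+k_r}}=E\Big[\frac{(X_{1,N})_{k_1}\cdots(X_{r,N})_{k_r}}{(S_N)_{k_1+\cdots+k_r}}\Big].$$ In particular, $$c_N:=\frac{E[(\nu_{1,N})_2]}{N-1}=N\,E\Big[\frac{X_{1,N}(X_{1,N}-1)}{S_N(S_N-1)}\Big].$$ Moreover, $c_N\ge\frac{\mathbb{P}(X_{1,N}\ge2)^2}{2N}$.
   Context: Cannings model with i.i.d. offspring numbers and sampling: for each $N$, let $X_{1,N},\dots,X_{N,N}$ be i.i.d. random variables with values in $\{1,2,\dots\}$ (the number of offspring of the $N$ individuals of a generation), and $S_N=X_{1,N}+\cdots+X_{N,N}$. Conditionally on these, $N$ of the $S_N$ offspring are sampled uniformly at random without replacement to form the next generation, and $\nu_{k,N}$ denotes the number of sampled offspring of the $k$th individual (so $\sum_k\nu_{k,N}=N$). This is repeated independently in each generation. $(x)_k=x(x-1)\cdots(x-k+1)$ denotes the falling factorial. *)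

theory Defs
  imports "HOL-Probability.Probability"
begin

definition ffac :: "real \<Rightarrow> nat \<Rightarrow> real" where
  "ffac x k = (\<Prod>i<k. x - real i)"

text \<open>Joint law of the offspring numbers X_{0,N},...,X_{N-1,N}: i.i.d. with law p
  (individuals are indexed 0..N-1; individual i+1 of the paper is index i).\<close>
definition offspring_pmf :: "nat pmf \<Rightarrow> nat \<Rightarrow> (nat \<Rightarrow> nat) pmf" where
  "offspring_pmf p N = Pi_pmf {..<N} 0 (\<lambda>_. p)"

definition total :: "nat \<Rightarrow> (nat \<Rightarrow> nat) \<Rightarrow> nat" where
  "total N x = (\<Sum>i<N. x i)"

definition offspring_set :: "nat \<Rightarrow> (nat \<Rightarrow> nat) \<Rightarrow> (nat \<times> nat) set" where
  "offspring_set N x = {(i, j). i < N \<and> j < x i}"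

definition sample_pmf :: "nat \<Rightarrow> (nat \<Rightarrow> nat) \<Rightarrow> (nat \<times> nat) set pmf" where
  "sample_pmf N x = pmf_of_set {A. A \<subseteq> offspring_set N x \<and> card A = N}"

definition nu :: "(nat \<times> nat) set \<Rightarrow> nat \<Rightarrow> nat" where
  "nu A i = card {j. (i, j) \<in> A}"

definition cannings_pmf :: "nat pmf \<Rightarrow> nat \<Rightarrow> ((nat \<Rightarrow> nat) \<times> (nat \<times> nat) set) pmf" where
  "cannings_pmf p N = do { x \<leftarrow> offspring_pmf p N; A \<leftarrow> sample_pmf N x; return_pmf (x, A) }"

definition cN :: "nat pmf \<Rightarrow> nat \<Rightarrow> real" where
  "cN p N = measure_pmf.expectation (cannings_pmf p N) (\<lambda>(x, A). ffac (real (nu A 0)) 2)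
            / (real N - 1)"

end

theory Submission
  imports Defs
begin

text \<open>Given the offspring numbers, the sample is a uniform N-subset of the S_N offspring.
  The product of the (\<nu>_i)_{k_i} counts ordered choices of k_i distinct sampled children of each
  individual i, and a fixed choice of K = k_1 + ... + k_r children lies in the sample with probability
  (N)_K / (S_N)_K; double counting gives the moment formula, and c_N is the case r = 1, k_1 = 2.
  For the lower bound put W = 1{X_1 \<ge> 2} X_1/S_N. Then X_1(X_1-1)/(S_N(S_N-1)) \<ge> W^2/2 and
  E[W^2] \<ge> E[W]^2, while E[W] \<ge> P(X_1 \<ge> 2) E[X_1/S_N] = P(X_1 \<ge> 2)/N: the inequality is
  Chebyshev's association inequality applied to X_1 given the other offspring numbers (X_1/S_N is
  increasing in X_1), the equality is exchangeability.\<close>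

lemma ffac_eq_fact_gchoose: "ffac x k = fact k * (x gchoose k)"
  by (simp add: ffac_def gbinomial_mult_fact atLeast0LessThan)

lemma of_nat_choose_eq_ffac: "real (n choose k) = ffac (real n) k / fact k"
  by (simp add: ffac_eq_fact_gchoose binomial_gbinomial)

lemma ffac_Suc: "ffac x (Suc k) = x * ffac (x - 1) k"
  unfolding ffac_def by (subst prod.lessThan_Suc_shift) (simp add: algebra_simps)

lemma ffac_2: "ffac x 2 = x * (x - 1)"
  unfolding ffac_def by (simp add: eval_nat_numeral)

lemma ffac_of_nat_eq_0: "n < k \<Longrightarrow> ffac (real n) k = 0"
  unfolding ffac_def by (rule prod_zero) (auto intro!: bexI[of _ n])

lemma ffac_of_nat_pos: "k \<le> n \<Longrightarrow> ffac (real n) k > 0"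
  unfolding ffac_def by (intro prod_pos) auto

lemma ffac_of_nat_nonneg: "ffac (real n) k \<ge> 0"
  using ffac_of_nat_eq_0 ffac_of_nat_pos by (metis less_eq_real_def not_le)

lemma card_distinct_lists_eq_ffac:
  assumes "finite B"
  shows "real (card {xs. length xs = k \<and> distinct xs \<and> set xs \<subseteq> B}) = ffac (real (card B)) k"
  using assms
proof (induction k arbitrary: B)
  case 0
  have "{xs. length xs = 0 \<and> distinct xs \<and> set xs \<subseteq> B} = {[]}" by auto
  thus ?case by (simp add: ffac_def)
next
  case (Suc k)
  define L where "L y = {xs. length xs = k \<and> distinct xs \<and> set xs \<subseteq> B - {y}}" for y
  have split: "{xs. length xs = Suc k \<and> distinct xs \<and> set xs \<subseteq> B} = (\<Union>y\<in>B. (#) y ` L y)"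
    unfolding L_def by (auto simp: length_Suc_conv) blast
  have "finite (L y)" for y
    unfolding L_def using finite_lists_length_eq[OF finite_Diff[OF Suc.prems, of "{y}"], of k]
    by (rule finite_subset[rotated]) auto
  hence "card (\<Union>y\<in>B. (#) y ` L y) = (\<Sum>y\<in>B. card ((#) y ` L y))"
    using Suc.prems by (intro card_UN_disjoint) auto
  also have "\<dots> = (\<Sum>y\<in>B. card (L y))"
    by (intro sum.cong refl card_image) auto
  finally have "real (card {xs. length xs = Suc k \<and> distinct xs \<and> set xs \<subseteq> B})
      = (\<Sum>y\<in>B. real (card (L y)))"
    unfolding split by simp
  also have "\<dots> = (\<Sum>y\<in>B. ffac (real (card B) - 1) k)"
  proof (intro sum.cong refl)
    fix y assume "y \<in> B"
    hence "card B \<ge> 1" using Suc.prems by (metis One_nat_def Suc_leI card_gt_0_iff empty_iff)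
    thus "real (card (L y)) = ffac (real (card B) - 1) k"
      unfolding L_def using \<open>y \<in> B\<close> Suc by (simp add: card_Diff_singleton of_nat_diff)
  qed
  also have "\<dots> = ffac (real (card B)) (Suc k)"
    by (simp add: ffac_Suc)
  finally show ?case .
qed

lemma card_supsets_of_card:
  assumes "finite \<Omega>" "B \<subseteq> \<Omega>" "card B \<le> N"
  shows "card {A. A \<subseteq> \<Omega> \<and> card A = N \<and> B \<subseteq> A} = (card \<Omega> - card B) choose (N - card B)"
proof -
  have "finite B" using assms finite_subset by blast
  have "bij_betw (\<lambda>C. C \<union> B) {C. C \<subseteq> \<Omega> - B \<and> card C = N - card B} {A. A \<subseteq> \<Omega> \<and> card A = N \<and> B \<subseteq> A}"
  proof (rule bij_betw_byWitness[where f' = "\<lambda>A. A - B"])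
    show "(\<lambda>C. C \<union> B) ` {C. C \<subseteq> \<Omega> - B \<and> card C = N - card B} \<subseteq> {A. A \<subseteq> \<Omega> \<and> card A = N \<and> B \<subseteq> A}"
    proof safe
      fix C assume "C \<subseteq> \<Omega> - B" "card C = N - card B"
      moreover from this have "finite C" using assms(1) by (meson finite_Diff finite_subset)
      ultimately show "card (C \<union> B) = N" using assms(3) \<open>finite B\<close> by (subst card_Un_disjoint) auto
    qed (use assms in auto)
    show "(\<lambda>A. A - B) ` {A. A \<subseteq> \<Omega> \<and> card A = N \<and> B \<subseteq> A} \<subseteq> {C. C \<subseteq> \<Omega> - B \<and> card C = N - card B}"
      using \<open>finite B\<close> by (auto simp: card_Diff_subset)
  qed auto
  hence "card {A. A \<subseteq> \<Omega> \<and> card A = N \<and> B \<subseteq> A} = card {C. C \<subseteq> \<Omega> - B \<and> card C = N - card B}"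
    by (simp add: bij_betw_same_card)
  also have "\<dots> = (card \<Omega> - card B) choose (N - card B)"
    using assms \<open>finite B\<close> by (simp add: n_subsets card_Diff_subset)
  finally show ?thesis .
qed

lemma choose_diff_div_choose_eq_ffac_div:
  assumes "K \<le> N" "N \<le> S"
  shows "real ((S - K) choose (N - K)) / real (S choose N) = ffac (real N) K / ffac (real S) K"
proof -
  have "real (S choose N) * real (N choose K) = real (S choose K) * real ((S - K) choose (N - K))"
    using choose_mult[OF assms] by (metis of_nat_mult)
  moreover have "real (S choose N) > 0" "real (S choose K) > 0"
    using assms by auto
  ultimately have "real ((S - K) choose (N - K)) / real (S choose N) = real (N choose K) / real (S choose K)"
    by (simp add: field_simps)
  thus ?thesis by (simp add: of_nat_choose_eq_ffac)
qed

lemma finite_subsets_of_card: "finite \<Omega> \<Longrightarrow> finite {A. A \<subseteq> \<Omega> \<and> card A = N}"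
  by (rule finite_subset[of _ "Pow \<Omega>"]) auto

lemma subsets_of_card_nonempty: "N \<le> card \<Omega> \<Longrightarrow> {A. A \<subseteq> \<Omega> \<and> card A = N} \<noteq> {}"
  using obtain_subset_with_card_n[of N \<Omega>] by auto

lemma prob_random_subset_contains:
  assumes "finite \<Omega>" "B \<subseteq> \<Omega>" "card B \<le> N" "N \<le> card \<Omega>"
  shows "measure_pmf.prob (pmf_of_set {A. A \<subseteq> \<Omega> \<and> card A = N}) {A. B \<subseteq> A}
         = ffac (real N) (card B) / ffac (real (card \<Omega>)) (card B)"
proof -
  let ?\<A> = "{A. A \<subseteq> \<Omega> \<and> card A = N}"
  have "?\<A> \<inter> {A. B \<subseteq> A} = {A. A \<subseteq> \<Omega> \<and> card A = N \<and> B \<subseteq> A}"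
    by auto
  hence "measure_pmf.prob (pmf_of_set ?\<A>) {A. B \<subseteq> A}
      = real ((card \<Omega> - card B) choose (N - card B)) / real (card \<Omega> choose N)"
    using assms finite_subsets_of_card[OF assms(1)] subsets_of_card_nonempty[OF assms(4)]
    by (simp add: measure_pmf_of_set card_supsets_of_card n_subsets)
  also have "\<dots> = ffac (real N) (card B) / ffac (real (card \<Omega>)) (card B)"
    using assms by (intro choose_diff_div_choose_eq_ffac_div)
  finally show ?thesis .
qed

definition ordered_picks :: "nat \<Rightarrow> (nat \<Rightarrow> nat) \<Rightarrow> (nat \<times> nat) set \<Rightarrow> (nat \<Rightarrow> nat list) set" where
  "ordered_picks r k A =
     (\<Pi>\<^sub>E i\<in>{..<r}. {xs. length xs = k i \<and> distinct xs \<and> set xs \<subseteq> {j. (i, j) \<in> A}})"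

definition picked :: "nat \<Rightarrow> (nat \<Rightarrow> nat list) \<Rightarrow> (nat \<times> nat) set" where
  "picked r t = (\<Union>i<r. Pair i ` set (t i))"

lemma finite_slice: "finite A \<Longrightarrow> finite {j. (i, j) \<in> A}"
  by (rule finite_subset[of _ "snd ` A"]) (force simp: image_iff)+

lemma card_ordered_picks:
  "finite A \<Longrightarrow> real (card (ordered_picks r k A)) = (\<Prod>i<r. ffac (real (nu A i)) (k i))"
  unfolding ordered_picks_def nu_def
  by (simp add: card_PiE card_distinct_lists_eq_ffac finite_slice)

lemma finite_ordered_picks: "finite A \<Longrightarrow> finite (ordered_picks r k A)"
  unfolding ordered_picks_def
  by (intro finite_PiE finite_subset[OF _ finite_lists_length_eq[OF finite_slice]]) auto

lemma ordered_picks_subset: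
  "A \<subseteq> \<Omega> \<Longrightarrow> ordered_picks r k A = {t \<in> ordered_picks r k \<Omega>. picked r t \<subseteq> A}"
  unfolding ordered_picks_def picked_def PiE_def Pi_def by (auto; blast)

lemma picked_subset: "t \<in> ordered_picks r k \<Omega> \<Longrightarrow> picked r t \<subseteq> \<Omega>"
  unfolding ordered_picks_def picked_def by auto

lemma card_picked:
  assumes "t \<in> ordered_picks r k \<Omega>"
  shows "card (picked r t) = (\<Sum>i<r. k i)"
proof -
  have "card (picked r t) = (\<Sum>i<r. card (Pair i ` set (t i)))"
    unfolding picked_def by (intro card_UN_disjoint) auto
  also have "\<dots> = (\<Sum>i<r. k i)"
  proof (intro sum.cong refl)
    fix i assume "i \<in> {..<r}"
    hence "length (t i) = k i" "distinct (t i)"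
      using assms unfolding ordered_picks_def by auto
    thus "card (Pair i ` set (t i)) = k i"
      by (simp add: card_image inj_on_def distinct_card)
  qed
  finally show ?thesis .
qed

lemma expectation_prod_ffac_nu_random_subset:
  assumes "finite \<Omega>" "(\<Sum>i<r. k i) \<le> N" "N \<le> card \<Omega>"
  shows "measure_pmf.expectation (pmf_of_set {A. A \<subseteq> \<Omega> \<and> card A = N})
           (\<lambda>A. \<Prod>i<r. ffac (real (nu A i)) (k i))
         = (\<Prod>i<r. ffac (real (nu \<Omega> i)) (k i)) * ffac (real N) (\<Sum>i<r. k i)
             / ffac (real (card \<Omega>)) (\<Sum>i<r. k i)"
proof -
  define K where "K = (\<Sum>i<r. k i)"
  let ?M = "pmf_of_set {A. A \<subseteq> \<Omega> \<and> card A = N}"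
  let ?T = "ordered_picks r k \<Omega>"
  have set_M: "set_pmf ?M = {A. A \<subseteq> \<Omega> \<and> card A = N}"
    using finite_subsets_of_card[OF assms(1)] subsets_of_card_nonempty[OF assms(3)] by simp
  have "measure_pmf.expectation ?M (\<lambda>A. \<Prod>i<r. ffac (real (nu A i)) (k i))
      = measure_pmf.expectation ?M (\<lambda>A. \<Sum>t\<in>?T. indicator {A. picked r t \<subseteq> A} A)"
  proof (intro integral_cong_AE)
    show "AE A in measure_pmf ?M. (\<Prod>i<r. ffac (real (nu A i)) (k i))
        = (\<Sum>t\<in>?T. indicator {A. picked r t \<subseteq> A} A)"
      unfolding AE_measure_pmf_iff set_M
    proof safe
      fix A assume "A \<subseteq> \<Omega>"
      hence "(\<Prod>i<r. ffac (real (nu A i)) (k i)) = real (card {t \<in> ?T. picked r t \<subseteq> A})"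
        using card_ordered_picks[of A r k] ordered_picks_subset[of A \<Omega> r k] assms(1)
        by (simp add: finite_subset)
      also have "\<dots> = (\<Sum>t\<in>?T. indicator {A. picked r t \<subseteq> A} A)"
        using finite_ordered_picks[OF assms(1)] by (simp add: indicator_def sum.If_cases Int_def)
      finally show "(\<Prod>i<r. ffac (real (nu A i)) (k i)) = (\<Sum>t\<in>?T. indicator {A. picked r t \<subseteq> A} A)" .
    qed
  qed simp_all
  also have "\<dots> = (\<Sum>t\<in>?T. measure_pmf.prob ?M {A. picked r t \<subseteq> A})"
    using finite_subsets_of_card[OF assms(1)]
    by (subst Bochner_Integration.integral_sum) (auto intro: integrable_measure_pmf_finite simp: set_M)
  also have "\<dots> = (\<Sum>t\<in>?T. ffac (real N) K / ffac (real (card \<Omega>)) K)"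
    using assms by (intro sum.cong refl)
      (simp add: prob_random_subset_contains picked_subset card_picked K_def)
  also have "\<dots> = (\<Prod>i<r. ffac (real (nu \<Omega> i)) (k i)) * ffac (real N) K / ffac (real (card \<Omega>)) K"
    using assms(1) by (simp add: card_ordered_picks)
  finally show ?thesis unfolding K_def .
qed

lemma finite_offspring_set: "finite (offspring_set N x)"
  by (rule finite_subset[of _ "{..<N} \<times> {..Max (x ` {..<N})}"])
    (auto simp: offspring_set_def intro: le_trans[OF less_imp_le Max_ge])

lemma card_offspring_set: "card (offspring_set N x) = total N x"
proof -
  have "offspring_set N x = Sigma {..<N} (\<lambda>i. {..<x i})"
    unfolding offspring_set_def by auto
  thus ?thesis unfolding total_def by (simp add: card_SigmaI)
qed

lemma nu_offspring_set: "i < N \<Longrightarrow> nu (offspring_set N x) i = x i"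
  unfolding nu_def offspring_set_def by simp

lemma member_le_total: "i < N \<Longrightarrow> x i \<le> total N x"
  unfolding total_def by (intro member_le_sum) auto

lemma total_ge_if_pos: "(\<And>i. i < N \<Longrightarrow> 1 \<le> x i) \<Longrightarrow> N \<le> total N x"
  using sum_mono[of "{..<N}" "\<lambda>_. 1::nat" x] by (simp add: total_def)

lemma finite_set_pmf_sample_pmf:
  assumes "\<And>i. i < N \<Longrightarrow> 1 \<le> x i"
  shows "finite (set_pmf (sample_pmf N x))"
proof -
  have "N \<le> card (offspring_set N x)"
    using assms by (simp add: card_offspring_set total_ge_if_pos)
  hence "set_pmf (sample_pmf N x) = {A. A \<subseteq> offspring_set N x \<and> card A = N}"
    unfolding sample_pmf_def
    by (intro set_pmf_of_set subsets_of_card_nonempty finite_subsets_of_card finite_offspring_set)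
  thus ?thesis
    using finite_subsets_of_card[OF finite_offspring_set] by simp
qed

lemma expectation_sample_prod_ffac_nu:
  assumes "\<And>i. i < N \<Longrightarrow> 1 \<le> x i" "r \<le> N" "(\<Sum>i<r. k i) \<le> N"
  shows "measure_pmf.expectation (sample_pmf N x) (\<lambda>A. \<Prod>i<r. ffac (real (nu A i)) (k i))
         = (\<Prod>i<r. ffac (real (x i)) (k i)) * ffac (real N) (\<Sum>i<r. k i)
             / ffac (real (total N x)) (\<Sum>i<r. k i)"
  unfolding sample_pmf_def
  using expectation_prod_ffac_nu_random_subset[OF finite_offspring_set assms(3)]
    total_ge_if_pos[OF assms(1)] assms(2)
  by (simp add: card_offspring_set nu_offspring_set)

lemma integral_bind_pmf_nonneg:
  fixes f :: "'b \<Rightarrow> real"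
  assumes nonneg: "\<And>y. 0 \<le> f y"
    and integrable: "\<And>x. x \<in> set_pmf M \<Longrightarrow> integrable (measure_pmf (F x)) f"
  shows "measure_pmf.expectation (bind_pmf M F) f
         = measure_pmf.expectation M (\<lambda>x. measure_pmf.expectation (F x) f)"
proof -
  have "measure_pmf.expectation (bind_pmf M F) f = enn2real (\<integral>\<^sup>+y. ennreal (f y) \<partial>bind_pmf M F)"
    using nonneg by (intro integral_eq_nn_integral) auto
  also have "(\<integral>\<^sup>+y. ennreal (f y) \<partial>bind_pmf M F) = (\<integral>\<^sup>+x. \<integral>\<^sup>+y. ennreal (f y) \<partial>F x \<partial>M)"
    by simp
  also have "\<dots> = (\<integral>\<^sup>+x. ennreal (measure_pmf.expectation (F x) f) \<partial>M)"
    using integrable nonneg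
    by (intro nn_integral_cong_AE) (auto simp: AE_measure_pmf_iff intro!: nn_integral_eq_integral)
  also have "enn2real \<dots> = measure_pmf.expectation M (\<lambda>x. measure_pmf.expectation (F x) f)"
    using nonneg by (intro integral_eq_nn_integral[symmetric]) (auto intro!: integral_nonneg_AE)
  finally show ?thesis .
qed

lemma offspring_pmf_pos:
  assumes "set_pmf p \<subseteq> {1..}" "x \<in> set_pmf (offspring_pmf p N)" "i < N"
  shows "1 \<le> x i"
  using assms unfolding offspring_pmf_def by (auto simp: set_Pi_pmf PiE_dflt_def)

lemma cannings_factorial_moments:
  assumes pos: "set_pmf p \<subseteq> {1..}" and "r \<le> N" and N: "(\<Sum>i<r. k i) \<le> N"
  shows "measure_pmf.expectation (cannings_pmf p N) (\<lambda>(x, A). \<Prod>i<r. ffac (real (nu A i)) (k i))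
           / ffac (real N) (\<Sum>i<r. k i)
         = measure_pmf.expectation (offspring_pmf p N)
             (\<lambda>x. (\<Prod>i<r. ffac (real (x i)) (k i)) / ffac (real (total N x)) (\<Sum>i<r. k i))"
proof -
  define K where "K = (\<Sum>i<r. k i)"
  let ?X = "offspring_pmf p N"
  let ?F = "\<lambda>x. (\<Prod>i<r. ffac (real (x i)) (k i)) / ffac (real (total N x)) K"
  have x_pos: "1 \<le> x i" if "x \<in> set_pmf ?X" "i < N" for x i
    using offspring_pmf_pos[OF pos that] .
  have "cannings_pmf p N = bind_pmf ?X (\<lambda>x. map_pmf (Pair x) (sample_pmf N x))"
    unfolding cannings_pmf_def by (simp add: map_pmf_def)
  hence "measure_pmf.expectation (cannings_pmf p N) (\<lambda>(x, A). \<Prod>i<r. ffac (real (nu A i)) (k i))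
      = measure_pmf.expectation ?X
          (\<lambda>x. measure_pmf.expectation (sample_pmf N x) (\<lambda>A. \<Prod>i<r. ffac (real (nu A i)) (k i)))"
    using x_pos
    by (simp only:, subst integral_bind_pmf_nonneg)
      (auto simp: prod_nonneg ffac_of_nat_nonneg intro!: integrable_measure_pmf_finite finite_set_pmf_sample_pmf)
  also have "\<dots> = measure_pmf.expectation ?X (\<lambda>x. ffac (real N) K * ?F x)"
    using x_pos \<open>r \<le> N\<close> N
    by (intro integral_cong_AE) (auto simp: AE_measure_pmf_iff expectation_sample_prod_ffac_nu K_def)
  also have "\<dots> = ffac (real N) K * measure_pmf.expectation ?X ?F"
    by (rule integral_mult_right_zero)
  finally show ?thesis
    using ffac_of_nat_pos[of K N] N by (simp add: K_def)
qed

lemma cN_eq_expectation: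
  assumes pos: "set_pmf p \<subseteq> {1..}" and N: "2 < N"
  shows "cN p N = real N * measure_pmf.expectation (offspring_pmf p N)
           (\<lambda>x. real (x 0) * (real (x 0) - 1) / (real (total N x) * (real (total N x) - 1)))"
proof -
  have "measure_pmf.expectation (cannings_pmf p N) (\<lambda>(x, A). ffac (real (nu A 0)) 2) / (real N * (real N - 1))
      = measure_pmf.expectation (offspring_pmf p N)
          (\<lambda>x. real (x 0) * (real (x 0) - 1) / (real (total N x) * (real (total N x) - 1)))"
    using cannings_factorial_moments[OF pos, where r = 1 and k = "\<lambda>_. 2"] N by (simp add: ffac_2)
  thus ?thesis
    using N unfolding cN_def by (simp add: field_simps)
qed

lemma integrable_measure_pmf_bounded:
  fixes f :: "'a \<Rightarrow> real"
  assumes "\<And>x. x \<in> set_pmf M \<Longrightarrow> \<bar>f x\<bar> \<le> B"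
  shows "integrable (measure_pmf M) f"
  by (rule measure_pmf.integrable_const_bound[where B = B]) (use assms in \<open>auto simp: AE_measure_pmf_iff\<close>)

text \<open>Pointwise (1_{y \<ge> m} - q) (\<phi> y - \<phi> m) \<ge> 0, and the expectation of this product is
  E[1_{y \<ge> m} \<phi>] - q E[\<phi>].\<close>
lemma prob_mult_expectation_le_if_mono:
  fixes \<phi> :: "'a::linorder \<Rightarrow> real"
  assumes "mono \<phi>" and integrable: "integrable (measure_pmf p) \<phi>"
  shows "measure_pmf.prob p {m..} * measure_pmf.expectation p \<phi>
         \<le> measure_pmf.expectation p (\<lambda>y. indicator {m..} y * \<phi> y)"
proof -
  let ?q = "measure_pmf.prob p {m..}"
  let ?I = "indicator {m..} :: 'a \<Rightarrow> real"
  have "0 \<le> measure_pmf.expectation p (\<lambda>y. (?I y - ?q) * (\<phi> y - \<phi> m))"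
  proof (intro integral_nonneg_AE AE_I2)
    fix y
    show "0 \<le> (?I y - ?q) * (\<phi> y - \<phi> m)"
      using monoD[OF \<open>mono \<phi>\<close>, of m y] monoD[OF \<open>mono \<phi>\<close>, of y m]
      by (cases "m \<le> y") (auto intro: mult_nonneg_nonneg mult_nonneg_nonpos[OF measure_nonneg])
  qed
  also have "\<dots> = measure_pmf.expectation p (\<lambda>y. (?I y * \<phi> y - ?q * \<phi> y) - \<phi> m * (?I y - ?q))"
    by (simp add: algebra_simps)
  also have "\<dots> = measure_pmf.expectation p (\<lambda>y. ?I y * \<phi> y) - ?q * measure_pmf.expectation p \<phi>"
  proof -
    have "integrable (measure_pmf p) ?I"
      by (rule integrable_measure_pmf_bounded[where B = 1]) (simp split: split_indicator)
    moreover have "integrable (measure_pmf p) (\<lambda>y. ?I y * \<phi> y)"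
      using integrable_real_mult_indicator[OF _ integrable] by (simp add: mult.commute)
    ultimately show ?thesis
      using integrable by simp
  qed
  finally show ?thesis by simp
qed

lemma mono_of_nat_div_add: "0 \<le> s \<Longrightarrow> mono (\<lambda>y::nat. real y / (real y + s))"
proof (intro monoI)
  fix a b :: nat assume "0 \<le> s" "a \<le> b"
  thus "real a / (real a + s) \<le> real b / (real b + s)"
    by (cases "a = 0") (auto simp: divide_simps mult_left_mono add_pos_nonneg algebra_simps)
qed

lemma expectation_offspring_pmf_swap:
  fixes F :: "nat \<Rightarrow> nat \<Rightarrow> real"
  assumes "i < N"
  shows "measure_pmf.expectation (offspring_pmf p N) (\<lambda>x. F (x i) (total N x))
         = measure_pmf.expectation (offspring_pmf p N) (\<lambda>x. F (x 0) (total N x))"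
proof -
  define h where "h j = (if j = 0 then i else if j = i then 0 else j)" for j
  have bij: "bij_betw h {..<N} {..<N}"
    by (rule bij_betwI[where g = h]) (use assms in \<open>auto simp: h_def\<close>)
  have permute: "offspring_pmf p N = map_pmf (\<lambda>g. g \<circ> h) (offspring_pmf p N)"
    unfolding offspring_pmf_def by (rule Pi_pmf_bij_betw) (use bij assms in \<open>auto simp: h_def\<close>)
  have "total N (g \<circ> h) = total N g" for g
    unfolding total_def using sum.reindex_bij_betw[OF bij, of g] by simp
  have "measure_pmf.expectation (offspring_pmf p N) (\<lambda>x. F (x 0) (total N x))
      = measure_pmf.expectation (map_pmf (\<lambda>g. g \<circ> h) (offspring_pmf p N)) (\<lambda>x. F (x 0) (total N x))"
    by (simp only: permute[symmetric])
  also have "\<dots> = measure_pmf.expectation (offspring_pmf p N) (\<lambda>x. F (x i) (total N x))"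
    by (simp add: \<open>\<And>g. total N (g \<circ> h) = total N g\<close> h_def)
  finally show ?thesis ..
qed

definition share :: "nat \<Rightarrow> (nat \<Rightarrow> nat) \<Rightarrow> real" where
  "share N x = real (x 0) / real (total N x)"

lemma share_bounds: "0 < N \<Longrightarrow> 0 \<le> share N x \<and> share N x \<le> 1"
  using member_le_total[of 0 N x] by (auto simp: share_def divide_le_eq_1)

lemma expectation_share:
  assumes pos: "set_pmf p \<subseteq> {1..}" and "0 < N"
  shows "measure_pmf.expectation (offspring_pmf p N) (share N) = 1 / real N"
proof -
  let ?X = "offspring_pmf p N"
  have "(\<Sum>i<N. measure_pmf.expectation ?X (\<lambda>x. real (x i) / real (total N x)))
      = (\<Sum>i<N. measure_pmf.expectation ?X (\<lambda>x. real (x 0) / real (total N x)))"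
    by (intro sum.cong refl expectation_offspring_pmf_swap[where F = "\<lambda>a b. real a / real b"]) simp
  hence "real N * measure_pmf.expectation ?X (share N)
      = (\<Sum>i<N. measure_pmf.expectation ?X (\<lambda>x. real (x i) / real (total N x)))"
    by (simp add: share_def[abs_def])
  also have "\<dots> = measure_pmf.expectation ?X (\<lambda>x. \<Sum>i<N. real (x i) / real (total N x))"
    by (intro Bochner_Integration.integral_sum[symmetric] integrable_measure_pmf_bounded[where B = 1])
      (auto simp: member_le_total divide_le_eq_1)
  also have "\<dots> = measure_pmf.expectation ?X (\<lambda>x. 1)"
  proof (intro integral_cong_AE)
    show "AE x in measure_pmf ?X. (\<Sum>i<N. real (x i) / real (total N x)) = 1"
      unfolding AE_measure_pmf_iff
    proof safe
      fix x assume "x \<in> set_pmf ?X"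
      hence "N \<le> total N x"
        using offspring_pmf_pos[OF pos] by (intro total_ge_if_pos)
      moreover have "(\<Sum>i<N. real (x i)) = real (total N x)"
        by (simp add: total_def)
      ultimately show "(\<Sum>i<N. real (x i) / real (total N x)) = 1"
        using \<open>0 < N\<close> by (simp add: sum_divide_distrib[symmetric])
    qed
  qed simp_all
  finally show ?thesis
    using \<open>0 < N\<close> by (simp add: field_simps)
qed

lemma offspring_pmf_split_first:
  assumes "0 < N"
  shows "offspring_pmf p N = bind_pmf (Pi_pmf {1..<N} 0 (\<lambda>_. p)) (\<lambda>f. map_pmf (\<lambda>y. f(0 := y)) p)"
proof -
  have "{..<N} = insert 0 {1..<N}"
    using assms by auto
  hence "offspring_pmf p N = do {y \<leftarrow> p; f \<leftarrow> Pi_pmf {1..<N} 0 (\<lambda>_. p); return_pmf (f(0 := y))}"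
    unfolding offspring_pmf_def by (simp add: Pi_pmf_insert')
  thus ?thesis
    by (subst (asm) bind_commute_pmf) (simp add: map_pmf_def)
qed

lemma expectation_offspring_pmf_split_first:
  fixes G :: "(nat \<Rightarrow> nat) \<Rightarrow> real"
  assumes "0 < N" and "\<And>x. 0 \<le> G x \<and> G x \<le> 1"
  shows "measure_pmf.expectation (offspring_pmf p N) G
         = measure_pmf.expectation (Pi_pmf {1..<N} 0 (\<lambda>_. p)) (\<lambda>f. measure_pmf.expectation p (\<lambda>y. G (f(0 := y))))"
  unfolding offspring_pmf_split_first[OF assms(1)] using assms(2)
  by (subst integral_bind_pmf_nonneg) (auto intro!: integrable_measure_pmf_bounded[where B = 1])

lemma total_fun_upd_0:
  assumes "0 < N"
  shows "total N (f(0 := y)) = y + (\<Sum>j\<in>{1..<N}. f j)"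
proof -
  have "{..<N} = insert 0 {1..<N}"
    using assms by auto
  thus ?thesis unfolding total_def by simp
qed

lemma prob_mult_expectation_share_le:
  assumes "0 < N"
  shows "measure_pmf.prob p {2..} * measure_pmf.expectation (offspring_pmf p N) (share N)
         \<le> measure_pmf.expectation (offspring_pmf p N) (\<lambda>x. indicator {2..} (x 0) * share N x)"
proof -
  let ?q = "measure_pmf.prob p {2..}"
  let ?P = "Pi_pmf {1..<N} 0 (\<lambda>_. p)"
  define s where "s f = real (\<Sum>j\<in>{1..<N}. f j)" for f :: "nat \<Rightarrow> nat"
  define \<phi> where "\<phi> f y = real y / (real y + s f)" for f y
  have share_upd: "share N (f(0 := y)) = \<phi> f y" for f y
    using assms by (simp add: share_def \<phi>_def s_def total_fun_upd_0)
  have \<phi>_bounds: "0 \<le> \<phi> f y \<and> \<phi> f y \<le> 1" for f y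
    using share_bounds[OF assms, of "f(0 := y)"] by (simp add: share_upd)
  have integrable: "integrable (measure_pmf M) (\<lambda>y. a y * \<phi> f y)"
    if "\<And>y. \<bar>a y\<bar> \<le> 1" for M :: "nat pmf" and a f
    using that \<phi>_bounds
    by (intro integrable_measure_pmf_bounded[where B = 1]) (auto simp: abs_mult intro: mult_le_one)
  have "?q * measure_pmf.expectation (offspring_pmf p N) (share N)
      = ?q * measure_pmf.expectation ?P (\<lambda>f. measure_pmf.expectation p (\<phi> f))"
    using assms share_bounds by (simp add: expectation_offspring_pmf_split_first share_upd)
  also have "\<dots> = measure_pmf.expectation ?P (\<lambda>f. ?q * measure_pmf.expectation p (\<phi> f))"
    by simp
  also have "\<dots> \<le> measure_pmf.expectation ?P (\<lambda>f. measure_pmf.expectation p (\<lambda>y. indicator {2..} y * \<phi> f y))"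
  proof (intro integral_mono)
    show "?q * measure_pmf.expectation p (\<phi> f) \<le> measure_pmf.expectation p (\<lambda>y. indicator {2..} y * \<phi> f y)" for f
      using integrable[of "\<lambda>_. 1"] unfolding \<phi>_def
      by (intro prob_mult_expectation_le_if_mono mono_of_nat_div_add) (auto simp: s_def sum_nonneg)
  qed (use \<phi>_bounds in \<open>auto intro!: integrable_measure_pmf_bounded[where B = 1] integral_nonneg_AE
        measure_pmf.integral_le_const integrable[of "\<lambda>_. 1"] integrable[of "indicator {2..}"]
        simp: AE_measure_pmf_iff split: split_indicator\<close>)
  also have "\<dots> = measure_pmf.expectation (offspring_pmf p N) (\<lambda>x. indicator {2..} (x 0) * share N x)"
    using assms share_bounds
    by (subst expectation_offspring_pmf_split_first) (auto simp: share_upd split: split_indicator)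
  finally show ?thesis .
qed

lemma sq_div_two_le_pair_ratio:
  fixes a S :: real
  assumes "2 \<le> a" "a \<le> S"
  shows "(a / S)\<^sup>2 / 2 \<le> a * (a - 1) / (S * (S - 1))"
proof -
  have "0 \<le> (a - 2) * S + a"
    using assms by simp
  moreover have "2 * (a - 1) * S - a * (S - 1) = (a - 2) * S + a"
    by (simp add: algebra_simps)
  ultimately have "a * (S - 1) \<le> 2 * (a - 1) * S"
    by linarith
  hence "a * (a * (S - 1)) * S \<le> a * (2 * (a - 1) * S) * S"
    using assms by (intro mult_right_mono mult_left_mono) auto
  hence "a\<^sup>2 * (S * (S - 1)) \<le> 2 * (a * (a - 1)) * S\<^sup>2"
    by (simp add: power2_eq_square algebra_simps)
  thus ?thesis
    using assms by (simp add: divide_simps power2_eq_square)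
qed

lemma pair_ratio_bounds:
  fixes a S :: nat
  assumes "a \<le> S"
  shows "0 \<le> real a * (real a - 1) / (real S * (real S - 1))"
    and "real a * (real a - 1) / (real S * (real S - 1)) \<le> 1"
proof -
  have "0 \<le> real a * (real a - 1)" and S_nonneg: "0 \<le> real S * (real S - 1)"
    by (cases a; cases S; simp)+
  thus "0 \<le> real a * (real a - 1) / (real S * (real S - 1))"
    by simp
  have "real a * (real a - 1) \<le> real S * (real S - 1)"
    using assms S_nonneg by (cases a) (auto intro: mult_mono)
  thus "real a * (real a - 1) / (real S * (real S - 1)) \<le> 1"
    using S_nonneg by (cases "real S * (real S - 1) = 0") (auto simp: divide_le_eq_1)
qed

lemma indicator_mult_share_sq_le:
  assumes "0 < N"
  shows "(indicator {2..} (x 0) * share N x)\<^sup>2 / 2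
         \<le> real (x 0) * (real (x 0) - 1) / (real (total N x) * (real (total N x) - 1))"
proof (cases "2 \<le> x 0")
  case True
  thus ?thesis
    using sq_div_two_le_pair_ratio[of "real (x 0)" "real (total N x)"] member_le_total[OF assms, of x]
    by (simp add: share_def)
next
  case False
  thus ?thesis
    using pair_ratio_bounds(1)[OF member_le_total[OF assms]] by simp
qed

lemma cN_lower_bound:
  assumes pos: "set_pmf p \<subseteq> {1..}" and N: "2 < N"
  shows "(measure_pmf.prob p {2..})\<^sup>2 / (2 * real N) \<le> cN p N"
proof -
  let ?X = "offspring_pmf p N"
  let ?q = "measure_pmf.prob p {2..}"
  define W where "W x = indicator {2..} (x 0) * share N x" for x
  define L where "L x = real (x 0) * (real (x 0) - 1) / (real (total N x) * (real (total N x) - 1))"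
    for x :: "nat \<Rightarrow> nat"
  have W_bounds: "0 \<le> W x \<and> W x \<le> 1" for x
    using share_bounds[of N x] N by (auto simp: W_def split: split_indicator)
  have L_bounds: "0 \<le> L x \<and> L x \<le> 1" for x
    using pair_ratio_bounds[OF member_le_total[of 0 N x]] N by (simp add: L_def)
  have integrable_W: "integrable (measure_pmf ?X) W"
    and integrable_W2: "integrable (measure_pmf ?X) (\<lambda>x. (W x)\<^sup>2)"
    and integrable_L: "integrable (measure_pmf ?X) L"
    using W_bounds L_bounds
    by (auto intro!: integrable_measure_pmf_bounded[where B = 1] simp: abs_square_le_1)
  have "?q / real N \<le> measure_pmf.expectation ?X W"
    using prob_mult_expectation_share_le[of N p] expectation_share[OF pos] N by (simp add: W_def[abs_def])
  hence "(?q / real N)\<^sup>2 \<le> (measure_pmf.expectation ?X W)\<^sup>2"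
    by (intro power_mono) auto
  also have "\<dots> \<le> measure_pmf.expectation ?X (\<lambda>x. (W x)\<^sup>2)"
    using measure_pmf.variance_eq[OF integrable_W integrable_W2] measure_pmf.variance_positive[of ?X W]
    by simp
  also have "\<dots> \<le> 2 * measure_pmf.expectation ?X L"
  proof -
    have "measure_pmf.expectation ?X (\<lambda>x. (W x)\<^sup>2 / 2) \<le> measure_pmf.expectation ?X L"
      using integrable_W2 integrable_L indicator_mult_share_sq_le[of N] N
      by (intro integral_mono) (auto simp: W_def L_def)
    thus ?thesis by simp
  qed
  finally have "(?q / real N)\<^sup>2 \<le> 2 * measure_pmf.expectation ?X L" .
  moreover have "cN p N = real N * measure_pmf.expectation ?X L"
    unfolding L_def by (rule cN_eq_expectation[OF pos N])
  ultimately show ?thesis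
    using N by (simp add: power2_eq_square field_simps)
qed

theorem lemma2p2:
  fixes p :: "nat pmf" and N :: nat
  assumes pos: "set_pmf p \<subseteq> {1..}"
  shows "(\<forall>(r::nat) (k::nat \<Rightarrow> nat). (\<forall>i<r. k i \<ge> 2) \<and> N > (\<Sum>i<r. k i) \<longrightarrow>
            measure_pmf.expectation (cannings_pmf p N)
              (\<lambda>(x, A). \<Prod>i<r. ffac (real (nu A i)) (k i))
            / ffac (real N) (\<Sum>i<r. k i)
          = measure_pmf.expectation (offspring_pmf p N)
              (\<lambda>x. (\<Prod>i<r. ffac (real (x i)) (k i)) / ffac (real (total N x)) (\<Sum>i<r. k i)))
       \<and> (N > 2 \<longrightarrow>
            cN p N = real N * measure_pmf.expectation (offspring_pmf p N)
              (\<lambda>x. real (x 0) * (real (x 0) - 1) / (real (total N x) * (real (total N x) - 1))))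
       \<and> (N > 2 \<longrightarrow> cN p N \<ge> (measure_pmf.prob p {2..})\<^sup>2 / (2 * real N))"
proof (intro conjI allI impI)
  fix r :: nat and k :: "nat \<Rightarrow> nat"
  assume k: "(\<forall>i<r. k i \<ge> 2) \<and> N > (\<Sum>i<r. k i)"
  hence "(\<Sum>i<r. 1::nat) \<le> (\<Sum>i<r. k i)"
    by (intro sum_mono) auto
  thus "measure_pmf.expectation (cannings_pmf p N) (\<lambda>(x, A). \<Prod>i<r. ffac (real (nu A i)) (k i))
        / ffac (real N) (\<Sum>i<r. k i)
      = measure_pmf.expectation (offspring_pmf p N)
          (\<lambda>x. (\<Prod>i<r. ffac (real (x i)) (k i)) / ffac (real (total N x)) (\<Sum>i<r. k i))"
    using k by (intro cannings_factorial_moments[OF pos]) auto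
qed (use cN_eq_expectation[OF pos] cN_lower_bound[OF pos] in auto)

end
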